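(* For every $\epsilon>0$ there exists $n_0$ such that for every $n\ge n_0$ and every composition $\lambda$ of $n$, $\pi(\mathcal{L}(\xi^\lambda_1),\mathcal{U}([0,1]))\le\epsilon$, where $\pi$ is the Lévy–Prokhorov metric on probability measures on $[0,1]$, $\mathcal{L}(\xi^\lambda_1)$ the law of $\xi^\lambda_1$ and $\mathcal{U}([0,1])$ the uniform law.
   Context: A composition $\lambda=(\lambda_1,\dots,\lambda_r)$ of $n$ has descent set $D_\lambda=\{\lambda_1,\dots,\lambda_1+\dots+\lambda_{r-1}\}$; $\Omega_\lambda=\{\sigma\in\mathfrak{S}_n:des(\sigma)=D_\lambda\}$ with $des(\sigma)=\{i:\sigma(i+1)<\sigma(i)\}$. A cell $i\in[1,n]$ is a peak if $i\in D_\lambda\cup\{n\}$ and $i-1\notin D_\lambda$, a valley if $i\notin D_\lambda$ and $i-1\in D_\lambda\cup\{0\}$. The slope $\mathfrak{s}(i)=[x(i),y(i)]$ is the maximal integer subinterval of $[1,n]$ containing $i$ and no peak or valley other than $i$. Let $\sigma_\lambda$ be uniform on $\Omega_\lambda$ and, conditionally on $\sigma_\lambda$, let $\xi^\lambda_1$ be uniform on $[\frac{x(\sigma_\lambda^{-1}(1))-1}{n},\frac{y(\sigma_\lambda^{-1}(1))}{n}]$ (here $\sigma_\lambda^{-1}(1)$ is the position of the letter $1$). *)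

theory Defs
  imports "HOL-Probability.Probability" "HOL-Combinatorics.Permutations"
begin

definition is_composition :: "nat \<Rightarrow> nat list \<Rightarrow> bool" where
  "is_composition n lam \<longleftrightarrow> (\<forall>p \<in> set lam. p > 0) \<and> sum_list lam = n"

definition comp_descents :: "nat list \<Rightarrow> nat set" where
  "comp_descents lam = {sum_list (take k lam) | k. 1 \<le> k \<and> k < length lam}"

definition perm_des :: "nat \<Rightarrow> (nat \<Rightarrow> nat) \<Rightarrow> nat set" where
  "perm_des n \<sigma> = {i. 1 \<le> i \<and> i < n \<and> \<sigma> (Suc i) < \<sigma> i}"

definition Omega :: "nat list \<Rightarrow> (nat \<Rightarrow> nat) set" where
  "Omega lam = {\<sigma>. \<sigma> permutes {1..sum_list lam} \<and>
                    perm_des (sum_list lam) \<sigma> = comp_descents lam}"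

definition is_peak :: "nat list \<Rightarrow> nat \<Rightarrow> bool" where
  "is_peak lam i \<longleftrightarrow> 1 \<le> i \<and> i \<le> sum_list lam \<and>
     i \<in> comp_descents lam \<union> {sum_list lam} \<and> (i - 1) \<notin> comp_descents lam"

definition is_valley :: "nat list \<Rightarrow> nat \<Rightarrow> bool" where
  "is_valley lam i \<longleftrightarrow> 1 \<le> i \<and> i \<le> sum_list lam \<and>
     i \<notin> comp_descents lam \<and> (i - 1) \<in> comp_descents lam \<union> {0}"

definition is_extremum :: "nat list \<Rightarrow> nat \<Rightarrow> bool" where
  "is_extremum lam i \<longleftrightarrow> is_peak lam i \<or> is_valley lam i"

text \<open>Slope [x(i), y(i)]: the maximal integer subinterval of [1,n] containing i
  and no peak or valley other than i.\<close>
definition slope_left :: "nat list \<Rightarrow> nat \<Rightarrow> nat" where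
  "slope_left lam i = (LEAST x. 1 \<le> x \<and> x \<le> i \<and>
       (\<forall>j. x \<le> j \<and> j < i \<longrightarrow> \<not> is_extremum lam j))"

definition slope_right :: "nat list \<Rightarrow> nat \<Rightarrow> nat" where
  "slope_right lam i = (GREATEST y. i \<le> y \<and> y \<le> sum_list lam \<and>
       (\<forall>j. i < j \<and> j \<le> y \<longrightarrow> \<not> is_extremum lam j))"

definition pos_one :: "nat \<Rightarrow> (nat \<Rightarrow> nat) \<Rightarrow> nat" where
  "pos_one n \<sigma> = (THE i. i \<in> {1..n} \<and> \<sigma> i = 1)"

definition xi1_law :: "nat list \<Rightarrow> real measure" where
  "xi1_law lam = (let n = sum_list lam in
     measure_pmf (pmf_of_set (Omega lam)) \<bind>
       (\<lambda>\<sigma>. uniform_measure lborel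
              {(real (slope_left lam (pos_one n \<sigma>)) - 1) / real n ..
                real (slope_right lam (pos_one n \<sigma>)) / real n}))"

definition unif01 :: "real measure" where
  "unif01 = uniform_measure lborel {0..1}"

definition eps_nbhd01 :: "real \<Rightarrow> real set \<Rightarrow> real set" where
  "eps_nbhd01 e A = {x \<in> {0..1}. \<exists>a \<in> A. dist x a < e}"

definition levy_prokhorov01 :: "real measure \<Rightarrow> real measure \<Rightarrow> real" where
  "levy_prokhorov01 \<mu> \<nu> = Inf {e. e > 0 \<and>
      (\<forall>A \<in> sets borel. A \<subseteq> {0..1} \<longrightarrow>
          measure \<mu> A \<le> measure \<nu> (eps_nbhd01 e A) + e \<and>
          measure \<nu> A \<le> measure \<mu> (eps_nbhd01 e A) + e)}"

end

theory Submission
  imports Defs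
begin

text \<open>The letter 1 of \<sigma> sits at a valley, whose slope lies between two consecutive peaks; so
  the law of \<xi> is fixed, up to one slope, by the probabilities that 1 sits left or right of
  a peak q. Exchanging two consecutive values keeps the descent set unless they occupy adjacent
  positions; hence, for a block S of positions entered by a descent and left by an ascent, the
  number of \<sigma> with v in \<sigma> ` S decreases in v. For S = [1, q) and S = (q, n] this gives
  P(pos 1 < q) \<ge> (q - 1) / n and P(pos 1 > q) \<ge> (n - q) / n, so the distribution function
  of \<xi> is within 1/n of the identity. Closeness of distribution functions on a grid of mesh
  1/m then bounds the Levy-Prokhorov distance.\<close>

section \<open>Compositions, descent sets and the position of the letter 1\<close>

lemma is_composition_sum_list: "is_composition n lam \<Longrightarrow> sum_list lam = n"
  by (simp add: is_composition_def)

lemma comp_descents_subset: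
  assumes "is_composition n lam"
  shows "comp_descents lam \<subseteq> {1..<n}"
proof
  fix d assume "d \<in> comp_descents lam"
  then obtain k where d: "d = sum_list (take k lam)" "1 \<le> k" "k < length lam"
    unfolding comp_descents_def by auto
  have pos: "\<forall>p\<in>set lam. 0 < p" and n: "sum_list lam = n"
    using assms by (auto simp: is_composition_def)
  have "lam ! 0 \<le> sum_list (take k lam)" "lam ! k \<le> sum_list (drop k lam)"
    using d by (auto intro!: member_le_sum_list exI[of _ 0] simp: in_set_conv_nth)
  moreover have "0 < lam ! 0" "0 < lam ! k"
    using d pos by (metis le_less_trans nth_mem zero_le)+
  moreover have "sum_list (take k lam) + sum_list (drop k lam) = n"
    by (metis append_take_drop_id sum_list_append n)
  ultimately show "d \<in> {1..<n}" using d(1) by auto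
qed

lemma perm_des_extend:
  assumes "\<sigma> permutes {1..n}"
  shows "perm_des (Suc n) \<sigma> = perm_des n \<sigma>"
proof -
  have "\<sigma> (Suc n) = Suc n" using assms by (rule permutes_not_in) auto
  moreover have "\<sigma> n \<le> n"
    using permutes_in_image[OF assms, of n] permutes_not_in[OF assms, of 0] by (cases "n = 0") auto
  ultimately show ?thesis by (auto simp: perm_des_def less_Suc_eq)
qed

text \<open>Raising every value by one and putting the value 1 at position n+1 keeps all comparisons
  among the first n positions and adds a descent at n.\<close>
lemma perm_des_extend_descent:
  assumes \<sigma>: "\<sigma> permutes {1..n}" and "1 \<le> n"
  shows "\<exists>\<tau>. \<tau> permutes {1..Suc n} \<and> perm_des (Suc n) \<tau> = insert n (perm_des n \<sigma>)"
proof -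
  define \<rho> where "\<rho> v = (if v \<in> {1..n} then Suc v else if v = Suc n then 1 else v)" for v
  have "\<rho> permutes {1..Suc n}"
  proof (rule inj_imp_permutes)
    show "inj_on \<rho> {1..Suc n}" unfolding \<rho>_def by (auto simp: inj_on_def)
  qed (auto simp: \<rho>_def)
  then have \<tau>: "\<rho> \<circ> \<sigma> permutes {1..Suc n}"
    using permutes_subset[OF \<sigma>, of "{1..Suc n}"] by (auto intro: permutes_compose)
  have img: "\<sigma> i \<in> {1..n}" if "i \<in> {1..n}" for i
    using permutes_in_image[OF \<sigma>] that by blast
  have top: "\<sigma> (Suc n) = Suc n" using \<sigma> by (rule permutes_not_in) auto
  have "i \<in> perm_des (Suc n) (\<rho> \<circ> \<sigma>) \<longleftrightarrow> i \<in> insert n (perm_des n \<sigma>)" for i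
  proof (cases "1 \<le> i \<and> i < n")
    case True
    with img[of i] img[of "Suc i"] show ?thesis by (auto simp: perm_des_def \<rho>_def)
  next
    case False
    with top img[of n] assms(2) show ?thesis by (auto simp: perm_des_def \<rho>_def)
  qed
  with \<tau> show ?thesis by blast
qed

lemma ex_permutes_perm_des:
  "D \<subseteq> {1..<n} \<Longrightarrow> \<exists>\<sigma>. \<sigma> permutes {1..n} \<and> perm_des n \<sigma> = D"
proof (induction n arbitrary: D)
  case 0
  then show ?case by (auto simp: perm_des_def intro!: exI[of _ id])
next
  case (Suc n)
  have "D - {n} \<subseteq> {1..<n}" using Suc.prems by auto
  then obtain \<sigma> where \<sigma>: "\<sigma> permutes {1..n}" "perm_des n \<sigma> = D - {n}"
    using Suc.IH by blast
  show ?case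
  proof (cases "n \<in> D")
    case True
    then have "1 \<le> n" using Suc.prems by auto
    with True \<sigma> perm_des_extend_descent[OF \<sigma>(1)] show ?thesis by (simp add: insert_absorb)
  next
    case False
    have "\<sigma> permutes {1..Suc n}" using \<sigma>(1) by (rule permutes_subset) auto
    with False \<sigma> perm_des_extend[OF \<sigma>(1)] show ?thesis by auto
  qed
qed

lemma Omega_composition:
  "is_composition n lam \<Longrightarrow>
     \<sigma> \<in> Omega lam \<longleftrightarrow> \<sigma> permutes {1..n} \<and> perm_des n \<sigma> = comp_descents lam"
  by (simp add: Omega_def is_composition_sum_list)

lemma finite_Omega: "finite (Omega lam)"
  by (rule finite_subset[OF _ finite_permutations[of "{1..sum_list lam}"]]) (auto simp: Omega_def)

lemma Omega_nonempty: "is_composition n lam \<Longrightarrow> Omega lam \<noteq> {}"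
  using ex_permutes_perm_des[OF comp_descents_subset] Omega_composition by blast

lemma pos_one_eq_inv:
  assumes "\<sigma> permutes {1..n}" "1 \<le> n"
  shows "pos_one n \<sigma> = inv \<sigma> 1"
proof -
  have "inv \<sigma> 1 \<in> {1..n}"
    using permutes_in_image[OF permutes_inv[OF assms(1)]] assms(2) by auto
  then show ?thesis
    unfolding pos_one_def using permutes_inverses[OF assms(1)]
    by (intro the_equality) (auto, metis)
qed

lemma pos_one_permutes:
  assumes "\<sigma> permutes {1..n}" "1 \<le> n"
  shows "pos_one n \<sigma> \<in> {1..n}" "\<sigma> (pos_one n \<sigma>) = 1"
  using permutes_in_image[OF permutes_inv[OF assms(1)]] permutes_inverses[OF assms(1)] assms
  by (auto simp: pos_one_eq_inv)

lemma pos_one_in_image_iff: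
  assumes "\<sigma> permutes {1..n}" "1 \<le> n"
  shows "1 \<in> \<sigma> ` T \<longleftrightarrow> pos_one n \<sigma> \<in> T"
  unfolding pos_one_eq_inv[OF assms] using permutes_inverses[OF assms(1)] by (metis image_iff)

lemma valley_pos_one:
  assumes comp: "is_composition n lam" and \<sigma>: "\<sigma> \<in> Omega lam" and "1 \<le> n"
  shows "is_valley lam (pos_one n \<sigma>)"
proof -
  have p: "\<sigma> permutes {1..n}" and des: "perm_des n \<sigma> = comp_descents lam"
    using \<sigma> comp by (auto simp: Omega_composition)
  define v where "v = pos_one n \<sigma>"
  have v: "v \<in> {1..n}" "\<sigma> v = 1" using pos_one_permutes[OF p \<open>1 \<le> n\<close>] by (auto simp: v_def)
  have img: "\<sigma> i \<in> {1..n}" if "i \<in> {1..n}" for i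
    using permutes_in_image[OF p] that by blast
  have "v \<notin> perm_des n \<sigma>"
    using v img[of "Suc v"] by (auto simp: perm_des_def)
  moreover have "v - 1 \<in> perm_des n \<sigma>" if "v \<noteq> 1"
  proof -
    have "\<sigma> (v - 1) \<noteq> 1"
    proof
      assume "\<sigma> (v - 1) = 1"
      then have "v - 1 = v" using v(2) permutes_inj[OF p] by (metis injD)
      then show False using v(1) by auto
    qed
    moreover have "v - 1 \<in> {1..n}" "Suc (v - 1) = v" using v that by auto
    ultimately show ?thesis using v img[of "v - 1"] by (auto simp: perm_des_def)
  qed
  ultimately have "v \<notin> comp_descents lam" "v - 1 \<in> comp_descents lam \<union> {0}"
    using des by auto
  then show ?thesis
    using v is_composition_sum_list[OF comp] unfolding v_def is_valley_def by auto
qed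

lemma peak_between:
  assumes comp: "is_composition n lam" and a: "a \<notin> comp_descents lam"
    and b: "b \<in> comp_descents lam" "a \<le> b"
  shows "\<exists>j. a < j \<and> j \<le> b \<and> is_peak lam j"
proof -
  define j where "j = (LEAST j. a \<le> j \<and> j \<in> comp_descents lam)"
  have j: "a \<le> j \<and> j \<in> comp_descents lam"
    unfolding j_def by (rule LeastI[of _ b]) (use b in auto)
  have "j \<le> b" unfolding j_def by (rule Least_le) (use b in auto)
  have "a < j" using j a by (cases "a = j") auto
  have "j - 1 \<notin> comp_descents lam"
  proof
    assume "j - 1 \<in> comp_descents lam"
    then have "j \<le> j - 1" using \<open>a < j\<close> unfolding j_def by (intro Least_le) auto
    then show False using \<open>a < j\<close> by simp
  qed
  with j have "is_peak lam j"
    using comp_descents_subset[OF comp] is_composition_sum_list[OF comp]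
    by (auto simp: is_peak_def)
  with \<open>a < j\<close> \<open>j \<le> b\<close> show ?thesis by blast
qed

lemma peak_valley_same:
  "is_composition n lam \<Longrightarrow> is_peak lam v \<Longrightarrow> is_valley lam v \<Longrightarrow> n = 1"
  by (auto simp: is_peak_def is_valley_def is_composition_sum_list)

section \<open>Slopes\<close>

lemma slope_left_spec:
  assumes "1 \<le> i"
  shows "1 \<le> slope_left lam i" "slope_left lam i \<le> i"
    and "\<And>j. slope_left lam i \<le> j \<Longrightarrow> j < i \<Longrightarrow> \<not> is_extremum lam j"
    and "slope_left lam i \<noteq> 1 \<Longrightarrow> is_extremum lam (slope_left lam i - 1)"
proof -
  define P where "P x \<longleftrightarrow> 1 \<le> x \<and> x \<le> i \<and> (\<forall>j. x \<le> j \<and> j < i \<longrightarrow> \<not> is_extremum lam j)" for x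
  have x: "P (slope_left lam i)"
    unfolding slope_left_def P_def[symmetric] by (rule LeastI[of _ i]) (use assms in \<open>auto simp: P_def\<close>)
  then show "1 \<le> slope_left lam i" "slope_left lam i \<le> i"
    and "\<And>j. slope_left lam i \<le> j \<Longrightarrow> j < i \<Longrightarrow> \<not> is_extremum lam j"
    by (auto simp: P_def)
  assume "slope_left lam i \<noteq> 1"
  moreover have "\<not> P (slope_left lam i - 1)"
  proof
    assume "P (slope_left lam i - 1)"
    then have "slope_left lam i \<le> slope_left lam i - 1"
      unfolding slope_left_def P_def[symmetric] by (rule Least_le)
    with \<open>slope_left lam i \<noteq> 1\<close> x show False by (auto simp: P_def)
  qed
  ultimately obtain j where j: "slope_left lam i - 1 \<le> j" "j < i" "is_extremum lam j"
    using x by (auto simp: P_def)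
  moreover have "\<not> slope_left lam i \<le> j" using j x by (auto simp: P_def)
  ultimately have "j = slope_left lam i - 1" by simp
  with j show "is_extremum lam (slope_left lam i - 1)" by simp
qed

lemma slope_right_spec:
  assumes "i \<le> sum_list lam"
  shows "i \<le> slope_right lam i" "slope_right lam i \<le> sum_list lam"
    and "\<And>j. i < j \<Longrightarrow> j \<le> slope_right lam i \<Longrightarrow> \<not> is_extremum lam j"
    and "slope_right lam i \<noteq> sum_list lam \<Longrightarrow> is_extremum lam (Suc (slope_right lam i))"
proof -
  define P where "P y \<longleftrightarrow> i \<le> y \<and> y \<le> sum_list lam \<and> (\<forall>j. i < j \<and> j \<le> y \<longrightarrow> \<not> is_extremum lam j)" for y
  have bound: "y \<le> sum_list lam" if "P y" for y using that by (simp add: P_def)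
  have Pi: "P i" using assms by (auto simp: P_def)
  have y: "P (slope_right lam i)"
    unfolding slope_right_def P_def[symmetric] by (rule GreatestI_nat[of P, OF Pi bound])
  then show "i \<le> slope_right lam i" "slope_right lam i \<le> sum_list lam"
    and "\<And>j. i < j \<Longrightarrow> j \<le> slope_right lam i \<Longrightarrow> \<not> is_extremum lam j"
    by (auto simp: P_def)
  assume "slope_right lam i \<noteq> sum_list lam"
  moreover have "\<not> P (Suc (slope_right lam i))"
  proof
    assume "P (Suc (slope_right lam i))"
    then have "Suc (slope_right lam i) \<le> slope_right lam i"
      unfolding slope_right_def P_def[symmetric] using bound by (rule Greatest_le_nat[of P])
    then show False by simp
  qed
  ultimately obtain j where j: "i < j" "j \<le> Suc (slope_right lam i)" "is_extremum lam j"
    using y by (auto simp: P_def)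
  moreover have "\<not> j \<le> slope_right lam i" using j y by (auto simp: P_def)
  ultimately have "j = Suc (slope_right lam i)" by simp
  with j show "is_extremum lam (Suc (slope_right lam i))" by simp
qed

definition slope_barrier :: "nat list \<Rightarrow> nat \<Rightarrow> bool" where
  "slope_barrier lam q \<longleftrightarrow> q = 0 \<or> is_peak lam q \<or> q = Suc (sum_list lam)"

lemma valley_slope_barriers:
  assumes comp: "is_composition n lam" and "2 \<le> n" and val: "is_valley lam v"
  shows "slope_barrier lam (slope_left lam v - 1)"
    and "slope_barrier lam (Suc (slope_right lam v))"
    and "slope_barrier lam q \<Longrightarrow> q < slope_left lam v \<or> slope_right lam v < q"
proof -
  let ?x = "slope_left lam v" and ?y = "slope_right lam v"
  have nn: "sum_list lam = n" using comp by (rule is_composition_sum_list)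
  have v: "1 \<le> v" "v \<le> n" "v \<notin> comp_descents lam" "v - 1 \<in> comp_descents lam \<union> {0}"
    using val nn by (auto simp: is_valley_def)
  note L = slope_left_spec[OF v(1), of lam] and R = slope_right_spec[of v lam, unfolded nn, OF v(2)]
  show "slope_barrier lam (?x - 1)"
  proof (cases "?x = 1")
    case False
    have "\<not> is_valley lam (?x - 1)"
    proof
      assume "is_valley lam (?x - 1)"
      then have "?x - 1 \<notin> comp_descents lam" by (simp add: is_valley_def)
      moreover have "v - 1 \<in> comp_descents lam" using v L(1,2) False by auto
      ultimately obtain q where q: "?x - 1 < q" "q \<le> v - 1" "is_peak lam q"
        using peak_between[OF comp] L(2) by (metis diff_le_mono)
      then have "?x \<le> q" "q < v" using L(1) v(1) by linarith+
      then show False using L(3) q(3) by (auto simp: is_extremum_def)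
    qed
    then show ?thesis using L(4)[OF False] by (simp add: slope_barrier_def is_extremum_def)
  qed (simp add: slope_barrier_def)
  show "slope_barrier lam (Suc ?y)"
  proof (cases "?y = n")
    case False
    have "\<not> is_valley lam (Suc ?y)"
    proof
      assume "is_valley lam (Suc ?y)"
      then have "?y \<in> comp_descents lam" using R(1) v(1) by (auto simp: is_valley_def)
      then obtain q where "v < q" "q \<le> ?y" "is_peak lam q"
        using peak_between[OF comp v(3)] R(1) by blast
      then show False using R(3)[of q] by (auto simp: is_extremum_def)
    qed
    then show ?thesis using R(4)[OF False] by (simp add: slope_barrier_def is_extremum_def)
  qed (simp add: slope_barrier_def nn)
  assume q: "slope_barrier lam q"
  show "q < ?x \<or> ?y < q"
  proof (rule ccontr)
    assume "\<not> (q < ?x \<or> ?y < q)"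
    then have "?x \<le> q" "q \<le> ?y" by auto
    moreover have "is_peak lam q"
      using q calculation L(1) R(2) by (auto simp: slope_barrier_def nn)
    ultimately show False
      using L(3)[of q] R(3)[of q] peak_valley_same[OF comp _ val] \<open>2 \<le> n\<close>
      by (cases q v rule: linorder_cases) (auto simp: is_extremum_def)
  qed
qed

section \<open>Basins and the exchange of consecutive values\<close>

lemma transpose_Suc_less_iff:
  "{a, b} \<noteq> {v, Suc v} \<Longrightarrow>
     Transposition.transpose v (Suc v) a < Transposition.transpose v (Suc v) b \<longleftrightarrow> a < b"
  by (auto simp: Transposition.transpose_def doubleton_eq_iff)

lemma perm_des_transpose_values:
  assumes "\<And>i. 1 \<le> i \<Longrightarrow> i < n \<Longrightarrow> {\<sigma> i, \<sigma> (Suc i)} \<noteq> {v, Suc v}"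
  shows "perm_des n (Transposition.transpose v (Suc v) \<circ> \<sigma>) = perm_des n \<sigma>"
proof -
  have "Transposition.transpose v (Suc v) (\<sigma> (Suc i)) < Transposition.transpose v (Suc v) (\<sigma> i)
      \<longleftrightarrow> \<sigma> (Suc i) < \<sigma> i" if "1 \<le> i" "i < n" for i
    using transpose_Suc_less_iff assms[OF that] by (metis insert_commute)
  then show ?thesis by (auto simp: perm_des_def)
qed

text \<open>Every \<sigma> in Omega lam descends when entering S from the left and ascends when leaving it
  to the right, so exchanging the values v and v + 1 with v + 1 in \<sigma> ` S and v not in \<sigma> ` S
  keeps \<sigma> in Omega lam.\<close>
definition is_basin :: "nat list \<Rightarrow> nat set \<Rightarrow> bool" where
  "is_basin lam S \<longleftrightarrow> S \<subseteq> {1..sum_list lam} \<and>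
     (\<forall>i. i \<in> S \<longrightarrow> Suc i \<in> {1..sum_list lam} - S \<longrightarrow> i \<notin> comp_descents lam) \<and>
     (\<forall>i. i \<in> {1..sum_list lam} - S \<longrightarrow> Suc i \<in> S \<longrightarrow> i \<in> comp_descents lam)"

lemma transpose_comp_in_Omega:
  assumes comp: "is_composition n lam" and basin: "is_basin lam S" and "1 \<le> v"
    and \<sigma>: "\<sigma> \<in> Omega lam" and in_S: "Suc v \<in> \<sigma> ` S" and not_in_S: "v \<notin> \<sigma> ` S"
  shows "Transposition.transpose v (Suc v) \<circ> \<sigma> \<in> Omega lam"
proof -
  have nn: "sum_list lam = n" using comp by (rule is_composition_sum_list)
  have p: "\<sigma> permutes {1..n}" and des: "perm_des n \<sigma> = comp_descents lam"
    using \<sigma> comp by (auto simp: Omega_composition)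
  have S: "S \<subseteq> {1..n}" using basin nn by (simp add: is_basin_def)
  have "Suc v \<le> n" using in_S S permutes_in_image[OF p] by force
  then have t: "Transposition.transpose v (Suc v) permutes {1..n}"
    using \<open>1 \<le> v\<close> by (intro permutes_swap_id) auto
  have "{\<sigma> i, \<sigma> (Suc i)} \<noteq> {v, Suc v}" if i: "1 \<le> i" "i < n" for i
  proof
    assume "{\<sigma> i, \<sigma> (Suc i)} = {v, Suc v}"
    then consider "\<sigma> i = v" "\<sigma> (Suc i) = Suc v" | "\<sigma> i = Suc v" "\<sigma> (Suc i) = v"
      by (auto simp: doubleton_eq_iff)
    then show False
    proof cases
      case 1
      then have "Suc i \<in> S" "i \<notin> S" using in_S not_in_S permutes_inj[OF p]
        by (auto dest: injD)
      then have "i \<in> perm_des n \<sigma>" using basin i des nn by (auto simp: is_basin_def)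
      then show False using 1 by (simp add: perm_des_def)
    next
      case 2
      then have "i \<in> S" "Suc i \<notin> S" using in_S not_in_S permutes_inj[OF p]
        by (auto dest: injD)
      then have "i \<notin> perm_des n \<sigma>" using basin i des nn by (auto simp: is_basin_def)
      then show False using 2 i by (simp add: perm_des_def)
    qed
  qed
  then have "perm_des n (Transposition.transpose v (Suc v) \<circ> \<sigma>) = comp_descents lam"
    using des by (simp add: perm_des_transpose_values)
  then show ?thesis using permutes_compose[OF p t] comp by (simp add: Omega_composition)
qed

lemma card_Omega_Suc_value_le:
  assumes comp: "is_composition n lam" and basin: "is_basin lam S" and "1 \<le> v"
  shows "card {\<sigma> \<in> Omega lam. Suc v \<in> \<sigma> ` S} \<le> card {\<sigma> \<in> Omega lam. v \<in> \<sigma> ` S}"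
proof -
  let ?t = "Transposition.transpose v (Suc v)"
  define f where "f \<sigma> = (if v \<in> \<sigma> ` S then \<sigma> else ?t \<circ> \<sigma>)" for \<sigma> :: "nat \<Rightarrow> nat"
  have tt: "?t \<circ> (?t \<circ> \<sigma>) = \<sigma>" for \<sigma> :: "nat \<Rightarrow> nat"
    by (simp add: fun_eq_iff)
  have image_t: "u \<in> (?t \<circ> \<sigma>) ` S \<longleftrightarrow> ?t u \<in> \<sigma> ` S" for u \<sigma>
    by (metis (no_types, lifting) comp_apply image_comp image_iff transpose_involutory)
  have "inj_on f {\<sigma> \<in> Omega lam. Suc v \<in> \<sigma> ` S}"
  proof (rule inj_onI)
    fix \<sigma> \<tau> assume \<sigma>: "\<sigma> \<in> {\<sigma> \<in> Omega lam. Suc v \<in> \<sigma> ` S}"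
      and \<tau>: "\<tau> \<in> {\<sigma> \<in> Omega lam. Suc v \<in> \<sigma> ` S}" and eq: "f \<sigma> = f \<tau>"
    have mixed: False if "Suc v \<in> \<sigma> ` S" "v \<notin> \<tau> ` S" "\<sigma> = ?t \<circ> \<tau>" for \<sigma> \<tau>
      using that(1,2) image_t[of "Suc v" \<tau>] by (simp add: that(3))
    show "\<sigma> = \<tau>"
    proof (cases "v \<in> \<sigma> ` S"; cases "v \<in> \<tau> ` S")
      assume "v \<in> \<sigma> ` S" "v \<in> \<tau> ` S"
      then show ?thesis using eq by (simp add: f_def)
    next
      assume "v \<in> \<sigma> ` S" "v \<notin> \<tau> ` S"
      then have "\<sigma> = ?t \<circ> \<tau>" using eq by (simp add: f_def)
      then show ?thesis using mixed[of \<sigma> \<tau>] \<sigma> \<open>v \<notin> \<tau> ` S\<close> by blast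
    next
      assume "v \<notin> \<sigma> ` S" "v \<in> \<tau> ` S"
      then have "\<tau> = ?t \<circ> \<sigma>" using eq by (simp add: f_def)
      then show ?thesis using mixed[of \<tau> \<sigma>] \<tau> \<open>v \<notin> \<sigma> ` S\<close> by blast
    next
      assume "v \<notin> \<sigma> ` S" "v \<notin> \<tau> ` S"
      then have "?t \<circ> (?t \<circ> \<sigma>) = ?t \<circ> (?t \<circ> \<tau>)" using eq by (simp add: f_def)
      then show ?thesis by (simp only: tt)
    qed
  qed
  moreover have "f ` {\<sigma> \<in> Omega lam. Suc v \<in> \<sigma> ` S} \<subseteq> {\<sigma> \<in> Omega lam. v \<in> \<sigma> ` S}"
  proof (rule image_subsetI)
    fix \<sigma> assume "\<sigma> \<in> {\<sigma> \<in> Omega lam. Suc v \<in> \<sigma> ` S}"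
    then have \<sigma>: "\<sigma> \<in> Omega lam" "Suc v \<in> \<sigma> ` S" by auto
    show "f \<sigma> \<in> {\<sigma> \<in> Omega lam. v \<in> \<sigma> ` S}"
    proof (cases "v \<in> \<sigma> ` S")
      case False
      then show ?thesis
        using transpose_comp_in_Omega[OF comp basin \<open>1 \<le> v\<close> \<sigma>] image_t[of v \<sigma>] \<sigma>(2)
        by (simp add: f_def)
    qed (simp add: f_def \<sigma>)
  qed
  ultimately show ?thesis
    by (rule card_inj_on_le) (auto intro: finite_subset[OF _ finite_Omega])
qed

text \<open>The counts decrease in the value, so the count for the value 1 is at least their mean.\<close>
lemma card_basin_mult_card_Omega_le:
  assumes comp: "is_composition n lam" and basin: "is_basin lam S"
  shows "card S * card (Omega lam) \<le> n * card {\<sigma> \<in> Omega lam. 1 \<in> \<sigma> ` S}"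
proof -
  let ?N = "\<lambda>v. card {\<sigma> \<in> Omega lam. v \<in> \<sigma> ` S}"
  have S: "S \<subseteq> {1..n}" using basin comp by (simp add: is_basin_def is_composition_sum_list)
  have decreasing: "?N v \<le> ?N 1" if "1 \<le> v" for v
    using that
  proof (induction v rule: dec_induct)
    case (step w)
    then show ?case using card_Omega_Suc_value_le[OF comp basin, of w] by simp
  qed simp
  have "?N v = (\<Sum>\<sigma>\<in>Omega lam. of_bool (v \<in> \<sigma> ` S))" for v
    using finite_Omega by (simp add: Int_def conj_commute)
  then have "(\<Sum>v\<in>{1..n}. ?N v) = (\<Sum>v\<in>{1..n}. \<Sum>\<sigma>\<in>Omega lam. of_bool (v \<in> \<sigma> ` S))"
    by simp
  also have "\<dots> = (\<Sum>\<sigma>\<in>Omega lam. \<Sum>v\<in>{1..n}. of_bool (v \<in> \<sigma> ` S))"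
    by (rule sum.swap)
  also have "\<dots> = (\<Sum>\<sigma>\<in>Omega lam. card S)"
  proof (rule sum.cong[OF refl])
    fix \<sigma> assume "\<sigma> \<in> Omega lam"
    then have p: "\<sigma> permutes {1..n}" using comp by (simp add: Omega_composition)
    then have "\<sigma> ` S \<subseteq> {1..n}" using S permutes_in_image[OF p] by auto
    then have "(\<Sum>v\<in>{1..n}. of_bool (v \<in> \<sigma> ` S)) = card (\<sigma> ` S)"
      by (simp add: Int_absorb1 Int_def[symmetric])
    also have "\<dots> = card S"
      using card_image[OF inj_on_subset[OF permutes_inj[OF p]]] by simp
    finally show "(\<Sum>v\<in>{1..n}. of_bool (v \<in> \<sigma> ` S)) = card S" .
  qed
  finally have "card S * card (Omega lam) = (\<Sum>v\<in>{1..n}. ?N v)" by simp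
  also have "\<dots> \<le> (\<Sum>v\<in>{1..n}. ?N 1)" by (rule sum_mono) (rule decreasing, simp)
  finally show ?thesis by simp
qed

lemma basin_below_peak:
  assumes "is_peak lam q"
  shows "is_basin lam {1..<q}"
proof -
  have "i = q - 1" if "i < q" "q \<le> Suc i" for i using that by linarith
  with assms show ?thesis by (auto simp: is_basin_def is_peak_def)
qed

lemma basin_above_peak: "is_composition n lam \<Longrightarrow> is_peak lam q \<Longrightarrow> is_basin lam {q<..n}"
  using comp_descents_subset[of n lam]
  by (auto simp: is_basin_def is_peak_def is_composition_sum_list less_Suc_eq)

lemma pos_one_Omega:
  "is_composition n lam \<Longrightarrow> \<sigma> \<in> Omega lam \<Longrightarrow> 1 \<le> n \<Longrightarrow> pos_one n \<sigma> \<in> {1..n}"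
  using pos_one_permutes(1)[of \<sigma> n] by (simp add: Omega_composition)

lemma Omega_one_in_image_eq:
  assumes "is_composition n lam" "1 \<le> n"
  shows "{\<sigma> \<in> Omega lam. 1 \<in> \<sigma> ` T} = {\<sigma> \<in> Omega lam. pos_one n \<sigma> \<in> T}"
  using pos_one_in_image_iff[of _ n T] assms by (auto simp: Omega_composition)

lemma card_pos_one_less_ge:
  assumes comp: "is_composition n lam" and "1 \<le> n" and "slope_barrier lam q"
  shows "(real q - 1) * card (Omega lam) \<le> n * card {\<sigma> \<in> Omega lam. pos_one n \<sigma> < q}"
proof -
  consider "q = 0" | "is_peak lam q" | "q = Suc n"
    using assms(3) comp by (auto simp: slope_barrier_def is_composition_sum_list)
  then show ?thesis
  proof cases
    case 2
    have "{\<sigma> \<in> Omega lam. 1 \<in> \<sigma> ` {1..<q}} = {\<sigma> \<in> Omega lam. pos_one n \<sigma> \<in> {1..<q}}"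
      by (rule Omega_one_in_image_eq[OF comp \<open>1 \<le> n\<close>])
    also have "\<dots> = {\<sigma> \<in> Omega lam. pos_one n \<sigma> < q}"
      using pos_one_Omega[OF comp _ \<open>1 \<le> n\<close>] by (intro Collect_cong) auto
    finally have "(q - 1) * card (Omega lam) \<le> n * card {\<sigma> \<in> Omega lam. pos_one n \<sigma> < q}"
      using card_basin_mult_card_Omega_le[OF comp basin_below_peak[OF 2]] by simp
    then have "real ((q - 1) * card (Omega lam)) \<le> real (n * card {\<sigma> \<in> Omega lam. pos_one n \<sigma> < q})"
      by (simp only: of_nat_le_iff)
    moreover have "1 \<le> q" using 2 by (simp add: is_peak_def)
    ultimately show ?thesis by (simp add: of_nat_diff)
  next
    case 3
    then have "{\<sigma> \<in> Omega lam. pos_one n \<sigma> < q} = Omega lam"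
      using pos_one_Omega[OF comp _ \<open>1 \<le> n\<close>] by fastforce
    then show ?thesis using 3 by simp
  qed simp
qed

lemma card_pos_one_greater_ge:
  assumes comp: "is_composition n lam" and "1 \<le> n" and "slope_barrier lam q"
  shows "(real n - q) * card (Omega lam) \<le> n * card {\<sigma> \<in> Omega lam. q < pos_one n \<sigma>}"
proof -
  consider "q = 0" | "is_peak lam q" | "q = Suc n"
    using assms(3) comp by (auto simp: slope_barrier_def is_composition_sum_list)
  then show ?thesis
  proof cases
    case 1
    then have "{\<sigma> \<in> Omega lam. q < pos_one n \<sigma>} = Omega lam"
      using pos_one_Omega[OF comp _ \<open>1 \<le> n\<close>] by fastforce
    then show ?thesis using 1 by simp
  next
    case 2
    then have "q \<le> n" using comp by (simp add: is_peak_def is_composition_sum_list)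
    have "{\<sigma> \<in> Omega lam. 1 \<in> \<sigma> ` {q<..n}} = {\<sigma> \<in> Omega lam. pos_one n \<sigma> \<in> {q<..n}}"
      by (rule Omega_one_in_image_eq[OF comp \<open>1 \<le> n\<close>])
    also have "\<dots> = {\<sigma> \<in> Omega lam. q < pos_one n \<sigma>}"
      using pos_one_Omega[OF comp _ \<open>1 \<le> n\<close>] by (intro Collect_cong) auto
    finally have "(n - q) * card (Omega lam) \<le> n * card {\<sigma> \<in> Omega lam. q < pos_one n \<sigma>}"
      using card_basin_mult_card_Omega_le[OF comp basin_above_peak[OF comp 2]] by simp
    then have "real ((n - q) * card (Omega lam)) \<le> real (n * card {\<sigma> \<in> Omega lam. q < pos_one n \<sigma>})"
      by (simp only: of_nat_le_iff)
    with \<open>q \<le> n\<close> show ?thesis by (simp add: of_nat_diff)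
  next
    case 3
    have "- real (card (Omega lam)) \<le> 0" by simp
    also have "0 \<le> real n * card {\<sigma> \<in> Omega lam. q < pos_one n \<sigma>}" by simp
    finally show ?thesis using 3 by simp
  qed
qed

section \<open>The distribution function of \<xi>\<close>

definition uniform_cdf :: "real \<Rightarrow> real \<Rightarrow> real \<Rightarrow> real" where
  "uniform_cdf l r t = (if r \<le> t then 1 else if t < l then 0 else (t - l) / (r - l))"

lemma measure_uniform_Icc_atLeastAtMost:
  assumes "0 \<le> l" "l < r"
  shows "measure (uniform_measure lborel {l..r}) {0..t} = uniform_cdf l r t"
proof -
  have "{l..r} \<inter> {0..t} = {l..min r t}" using assms(1) by auto
  then show ?thesis
    using assms by (simp add: measure_uniform_measure uniform_cdf_def min_def not_le)
qed

lemma uniform_cdf_divide: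
  "0 < c \<Longrightarrow> uniform_cdf (l / c) (r / c) (t / c) = uniform_cdf l r t"
  by (simp add: uniform_cdf_def divide_le_cancel divide_less_cancel diff_divide_distrib[symmetric])

lemma uniform_cdf_bounds:
  assumes "a \<le> t" "t < b"
  shows "0 \<le> uniform_cdf a (b - 1) t" "uniform_cdf a (b - 1) t \<le> 1"
    and "t \<le> a + uniform_cdf a (b - 1) t * (b - a)" "a + uniform_cdf a (b - 1) t * (b - a) \<le> t + 1"
proof -
  let ?c = "uniform_cdf a (b - 1) t"
  have "0 \<le> ?c \<and> ?c \<le> 1 \<and> t \<le> a + ?c * (b - a) \<and> a + ?c * (b - a) \<le> t + 1"
  proof (cases "b - 1 \<le> t")
    case False
    then have "0 < b - 1 - a" "a + ?c * (b - a) = t + ?c" using assms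
      by (simp_all add: uniform_cdf_def field_simps)
    with False assms show ?thesis by (simp add: uniform_cdf_def field_simps)
  qed (use assms in \<open>simp add: uniform_cdf_def\<close>)
  then show "0 \<le> ?c" "?c \<le> 1" "t \<le> a + ?c * (b - a)" "a + ?c * (b - a) \<le> t + 1"
    by auto
qed

lemma ex_consecutive_around:
  fixes Q :: "nat set" and t :: real
  assumes "finite Q" "0 \<in> Q" "0 \<le> t" "q \<in> Q" "t < q"
  shows "\<exists>a\<in>Q. \<exists>b\<in>Q. a \<le> t \<and> t < b \<and> (\<forall>q\<in>Q. q \<le> a \<or> b \<le> q)"
proof -
  define A where "A = {q \<in> Q. real q \<le> t}"
  define B where "B = {q \<in> Q. t < real q}"
  have "0 \<in> A" "q \<in> B" using assms by (simp_all add: A_def B_def)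
  moreover have "finite A" "finite B" using assms(1) by (simp_all add: A_def B_def)
  ultimately have A: "finite A" "A \<noteq> {}" and B: "finite B" "B \<noteq> {}" by auto
  have a: "Max A \<in> Q" "real (Max A) \<le> t" using Max_in[OF A] by (auto simp: A_def)
  have b: "Min B \<in> Q" "t < real (Min B)" using Min_in[OF B] by (auto simp: B_def)
  have consecutive: "q \<le> Max A \<or> Min B \<le> q" if "q \<in> Q" for q
  proof (cases "real q \<le> t")
    case True
    then show ?thesis using that Max_ge[OF A(1)] by (simp add: A_def)
  next
    case False
    then show ?thesis using that Min_le[OF B(1)] by (simp add: B_def)
  qed
  show ?thesis
    by (rule bexI[OF _ a(1)], rule bexI[OF _ b(1)]) (use a(2) b(2) consecutive in simp)
qed

text \<open>A slope [x, y] lies between two consecutive barriers x - 1 and y + 1; so if a and b are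
  consecutive barriers around t, the slope is either left of a, right of b, or equal to [a + 1, b - 1].\<close>
lemma uniform_cdf_slope_between:
  fixes a b x y v :: nat and t :: real
  assumes ab: "a \<in> Q" "b \<in> Q" "a \<le> t" "t < b" "\<forall>q\<in>Q. q \<le> a \<or> b \<le> q"
    and xy: "x - 1 \<in> Q" "Suc y \<in> Q" "\<forall>q\<in>Q. q < x \<or> y < q" "1 \<le> x" "x \<le> v" "v \<le> y"
  shows "uniform_cdf (real x - 1) y t =
    (if v < a then 1 else if b < v then 0 else uniform_cdf a (real b - 1) t)"
proof -
  have a: "a < x \<or> y < a" and b: "b < x \<or> y < b"
    and x: "x - 1 \<le> a \<or> b \<le> x - 1" and y: "Suc y \<le> a \<or> b \<le> Suc y"
    using ab xy by blast+
  have "a < b" using ab(3,4) by linarith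
  have "v \<noteq> a" "v \<noteq> b" using a b xy(5,6) by auto
  then consider "v < a" | "b < v" | "a < v" "v < b" by fastforce
  then show ?thesis
  proof cases
    case 1
    then have "y < a" using a xy(5) by auto
    then show ?thesis using 1 ab(3) by (simp add: uniform_cdf_def)
  next
    case 2
    then have "b < x" using b xy(6) by auto
    then show ?thesis using 2 ab(4) \<open>a < b\<close> xy(5,6) by (simp add: uniform_cdf_def)
  next
    case 3
    then have "x = Suc a" using a x xy(4,5,6) by auto
    moreover have "b = Suc y" using 3 b y xy(5,6) by auto
    ultimately show ?thesis using 3 by simp
  qed
qed

text \<open>The conditional distribution function at t is 1 for G permutations, 0 for H of them and c
  for the remaining N - G - H.\<close>
lemma mixture_estimate:
  fixes G H N a b t n c :: real
  assumes "0 \<le> N"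
    and G: "(a - 1) * N \<le> n * G" "n * G \<le> a * N"
    and H: "(n - b) * N \<le> n * H" "n * H \<le> (n - b + 1) * N"
    and c: "0 \<le> c" "c \<le> 1" "t \<le> a + c * (b - a)" "a + c * (b - a) \<le> t + 1"
  shows "\<bar>n * (G + c * (N - G - H)) - N * t\<bar> \<le> N"
proof -
  have split: "n * (G + c * (N - G - H)) = (1 - c) * (n * G) + c * (n * N - n * H)"
    by (simp add: algebra_simps)
  have "(1 - c) * (n * G) \<le> (1 - c) * (a * N)" "c * (n * N - n * H) \<le> c * (b * N)"
    using G H c by (intro mult_left_mono; simp add: algebra_simps)+
  moreover have "(1 - c) * ((a - 1) * N) \<le> (1 - c) * (n * G)"
    "c * ((b - 1) * N) \<le> c * (n * N - n * H)"
    using G H c by (intro mult_left_mono; simp add: algebra_simps)+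
  moreover have "N * t \<le> N * (a + c * (b - a))" "N * (a + c * (b - a)) \<le> N * (t + 1)"
    using c \<open>0 \<le> N\<close> by (intro mult_left_mono; simp)+
  ultimately show ?thesis unfolding split by (simp add: abs_le_iff algebra_simps)
qed

definition slope_interval :: "nat list \<Rightarrow> (nat \<Rightarrow> nat) \<Rightarrow> real set" where
  "slope_interval lam \<sigma> = (let n = sum_list lam; p = pos_one n \<sigma> in
     {(real (slope_left lam p) - 1) / real n .. real (slope_right lam p) / real n})"

lemma xi1_law_eq:
  "xi1_law lam = measure_pmf (pmf_of_set (Omega lam)) \<bind> (\<lambda>\<sigma>. uniform_measure lborel (slope_interval lam \<sigma>))"
  by (simp add: xi1_law_def slope_interval_def Let_def)

lemma subprob_space_uniform_Icc: "subprob_space (uniform_measure lborel {a..b :: real})"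
proof (cases "a < b")
  case True
  then show ?thesis by (intro prob_space_imp_subprob_space prob_space_uniform_measure) auto
next
  case False
  then have "emeasure lborel {a..b} = 0" by (cases "a = b") auto
  then show ?thesis by (intro subprob_spaceI) auto
qed

lemma uniform_slope_interval_measurable:
  "(\<lambda>\<sigma>. uniform_measure lborel (slope_interval lam \<sigma>)) \<in> measure_pmf p \<rightarrow>\<^sub>M subprob_algebra lborel"
  by (auto simp: space_subprob_algebra slope_interval_def Let_def subprob_space_uniform_Icc)

lemma finite_measure_xi1_law: "finite_measure (xi1_law lam)"
  using subprob_space_bind[OF measure_pmf.subprob_space_axioms uniform_slope_interval_measurable]
  by (simp add: xi1_law_eq subprob_space_def)

lemma sets_xi1_law: "sets (xi1_law lam) = sets borel"
  unfolding xi1_law_eq by (subst sets_bind[where N = lborel]) auto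

lemma measure_xi1_law:
  assumes "Omega lam \<noteq> {}" "X \<in> sets borel"
  shows "measure (xi1_law lam) X =
    (\<Sum>\<sigma>\<in>Omega lam. measure (uniform_measure lborel (slope_interval lam \<sigma>)) X) / card (Omega lam)"
  unfolding xi1_law_eq
  using measure_pmf.measure_bind[OF uniform_slope_interval_measurable, of X] assms
  by (simp add: integral_pmf_of_set[OF assms(1) finite_Omega])

lemma measure_uniform_slope_interval_atLeastAtMost:
  assumes comp: "is_composition n lam" and "2 \<le> n" and \<sigma>: "\<sigma> \<in> Omega lam"
    and ab: "slope_barrier lam a" "slope_barrier lam b" "a \<le> n * t" "n * t < b"
      "\<forall>q. slope_barrier lam q \<longrightarrow> q \<le> a \<or> b \<le> q"
  shows "measure (uniform_measure lborel (slope_interval lam \<sigma>)) {0..t} =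
    (if pos_one n \<sigma> < a then 1 else if b < pos_one n \<sigma> then 0 else uniform_cdf a (real b - 1) (n * t))"
proof -
  define v where "v = pos_one n \<sigma>"
  have val: "is_valley lam v" using valley_pos_one[OF comp \<sigma>] \<open>2 \<le> n\<close> by (simp add: v_def)
  let ?x = "slope_left lam v" and ?y = "slope_right lam v"
  have v: "1 \<le> v" "v \<le> n" using val comp by (auto simp: is_valley_def is_composition_sum_list)
  have xy: "1 \<le> ?x" "?x \<le> v" "v \<le> ?y"
    using slope_left_spec[OF v(1)] slope_right_spec[of v lam] v comp by (auto simp: is_composition_sum_list)
  have n: "0 < real n" using \<open>2 \<le> n\<close> by simp
  have "slope_interval lam \<sigma> = {(real ?x - 1) / n .. real ?y / n}"
    using comp by (simp add: slope_interval_def v_def is_composition_sum_list Let_def)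
  then have "measure (uniform_measure lborel (slope_interval lam \<sigma>)) {0..t}
      = uniform_cdf ((real ?x - 1) / n) (real ?y / n) (n * t / n)"
    using xy n by (simp add: measure_uniform_Icc_atLeastAtMost divide_strict_right_mono)
  also have "\<dots> = uniform_cdf (real ?x - 1) ?y (n * t)" by (rule uniform_cdf_divide[OF n])
  also have "\<dots> = (if v < a then 1 else if b < v then 0 else uniform_cdf a (real b - 1) (n * t))"
    by (rule uniform_cdf_slope_between[where Q = "Collect (slope_barrier lam)"])
      (use ab xy valley_slope_barriers[OF comp \<open>2 \<le> n\<close> val] in auto)
  finally show ?thesis by (simp add: v_def)
qed

lemma card_pos_one_less_greater_le:
  "real n * card {\<sigma> \<in> Omega lam. pos_one n \<sigma> < q} + real n * card {\<sigma> \<in> Omega lam. q < pos_one n \<sigma>}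
     \<le> real n * card (Omega lam)"
proof -
  have "card {\<sigma> \<in> Omega lam. pos_one n \<sigma> < q} + card {\<sigma> \<in> Omega lam. q < pos_one n \<sigma>}
      = card ({\<sigma> \<in> Omega lam. pos_one n \<sigma> < q} \<union> {\<sigma> \<in> Omega lam. q < pos_one n \<sigma>})"
    by (rule card_Un_disjoint[symmetric]) (auto intro: finite_subset[OF _ finite_Omega])
  also have "\<dots> \<le> card (Omega lam)" by (rule card_mono[OF finite_Omega]) auto
  finally show ?thesis by (simp flip: distrib_left of_nat_add add: mult_left_mono)
qed

lemma card_pos_one_less_le:
  assumes "is_composition n lam" "1 \<le> n" "slope_barrier lam q"
  shows "real n * card {\<sigma> \<in> Omega lam. pos_one n \<sigma> < q} \<le> real q * card (Omega lam)"
  using card_pos_one_greater_ge[OF assms] card_pos_one_less_greater_le[of n lam q]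
  by (simp add: algebra_simps)

lemma card_pos_one_greater_le:
  assumes "is_composition n lam" "1 \<le> n" "slope_barrier lam q"
  shows "real n * card {\<sigma> \<in> Omega lam. q < pos_one n \<sigma>} \<le> (real n - q + 1) * card (Omega lam)"
  using card_pos_one_less_ge[OF assms] card_pos_one_less_greater_le[of n lam q]
  by (simp add: algebra_simps)

lemma ex_consecutive_barriers:
  fixes s :: real
  assumes comp: "is_composition n lam" and "0 \<le> s" "s \<le> n"
  obtains a b where "slope_barrier lam a" "slope_barrier lam b" "a \<le> s" "s < b"
    "\<forall>q. slope_barrier lam q \<longrightarrow> q \<le> a \<or> b \<le> q"
proof -
  have "Collect (slope_barrier lam) \<subseteq> {0..Suc n}"
    using comp by (auto simp: slope_barrier_def is_peak_def is_composition_sum_list)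
  then have "finite (Collect (slope_barrier lam))" by (rule finite_subset) simp
  moreover have "slope_barrier lam 0" "slope_barrier lam (Suc n)"
    using comp by (simp_all add: slope_barrier_def is_composition_sum_list)
  ultimately show ?thesis
    using ex_consecutive_around[of "Collect (slope_barrier lam)" s "Suc n"] assms that by auto
qed

lemma cdf_xi1_law:
  assumes comp: "is_composition n lam" and "2 \<le> n" and t: "0 \<le> t" "t \<le> 1"
  shows "\<bar>measure (xi1_law lam) {0..t} - t\<bar> \<le> 1 / n"
proof -
  define N where "N = real (card (Omega lam))"
  have n: "0 < real n" using \<open>2 \<le> n\<close> by simp
  have N: "0 < N" using Omega_nonempty[OF comp] finite_Omega by (simp add: N_def card_gt_0_iff)
  have "0 \<le> n * t" "n * t \<le> n" using t by (simp_all add: mult_left_le)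
  then obtain a b where ab: "slope_barrier lam a" "slope_barrier lam b" "a \<le> n * t" "n * t < b"
      "\<forall>q. slope_barrier lam q \<longrightarrow> q \<le> a \<or> b \<le> q"
    by (rule ex_consecutive_barriers[OF comp])
  define c where "c = uniform_cdf a (real b - 1) (n * t)"
  define G where "G = real (card {\<sigma> \<in> Omega lam. pos_one n \<sigma> < a})"
  define H where "H = real (card {\<sigma> \<in> Omega lam. b < pos_one n \<sigma>})"
  have "a < b" using ab(3,4) by linarith
  have "(\<Sum>\<sigma>\<in>Omega lam. measure (uniform_measure lborel (slope_interval lam \<sigma>)) {0..t})
      = (\<Sum>\<sigma>\<in>Omega lam. of_bool (pos_one n \<sigma> < a)
           + c * (1 - of_bool (pos_one n \<sigma> < a) - of_bool (b < pos_one n \<sigma>)))"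
    using measure_uniform_slope_interval_atLeastAtMost[OF comp \<open>2 \<le> n\<close> _ ab] \<open>a < b\<close>
    by (intro sum.cong) (auto simp: c_def)
  also have "\<dots> = G + c * (N - G - H)"
    using finite_Omega
    by (simp add: sum.distrib sum_subtractf sum_distrib_left[symmetric] G_def H_def N_def
        Collect_conj_eq Int_commute)
  finally have sum: "measure (xi1_law lam) {0..t} = (G + c * (N - G - H)) / N"
    using measure_xi1_law[OF Omega_nonempty[OF comp]] by (simp add: N_def)
  have bound: "\<bar>n * (G + c * (N - G - H)) - N * (n * t)\<bar> \<le> N"
    using card_pos_one_less_ge[OF comp _ ab(1)] card_pos_one_less_le[OF comp _ ab(1)]
      card_pos_one_greater_ge[OF comp _ ab(2)] card_pos_one_greater_le[OF comp _ ab(2)]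
      uniform_cdf_bounds[OF ab(3,4)] \<open>2 \<le> n\<close>
    unfolding G_def H_def N_def c_def by (intro mixture_estimate) auto
  have "(G + c * (N - G - H)) / N - t = (n * (G + c * (N - G - H)) - N * (n * t)) / (n * N)"
    using n N by (simp add: field_simps)
  then have "\<bar>(G + c * (N - G - H)) / N - t\<bar> = \<bar>n * (G + c * (N - G - H)) - N * (n * t)\<bar> / (n * N)"
    using n N by (simp add: abs_divide)
  also have "\<dots> \<le> N / (n * N)" by (rule divide_right_mono) (use bound n N in auto)
  also have "\<dots> = 1 / n" using N by simp
  finally show ?thesis unfolding sum .
qed

section \<open>The Levy-Prokhorov distance on [0, 1]\<close>

lemma levy_prokhorov01_le:
  assumes "0 < e"
    and "\<And>A. A \<in> sets borel \<Longrightarrow> A \<subseteq> {0..1} \<Longrightarrow>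
      measure M A \<le> measure U (eps_nbhd01 e A) + e \<and> measure U A \<le> measure M (eps_nbhd01 e A) + e"
  shows "levy_prokhorov01 M U \<le> e"
  unfolding levy_prokhorov01_def by (rule cInf_lower) (use assms in \<open>auto intro: bdd_belowI[of _ 0]\<close>)

lemma eps_nbhd01_borel: "eps_nbhd01 e A \<in> sets borel"
proof -
  have "eps_nbhd01 e A = {0..1} \<inter> (\<Union>a\<in>A. ball a e)"
    by (auto simp: eps_nbhd01_def dist_commute)
  moreover have "open (\<Union>a\<in>A. ball a e)" by auto
  ultimately show ?thesis by (metis borel_open borel_closed closed_atLeastAtMost sets.Int)
qed

definition grid_cell :: "nat \<Rightarrow> nat \<Rightarrow> real set" where
  "grid_cell m i = (if i = 0 then {0 .. 1 / m} else {i / m <.. Suc i / m})"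

lemma grid_cell_subset:
  "0 < m \<Longrightarrow> i < m \<Longrightarrow> grid_cell m i \<subseteq> {i / m .. Suc i / m} \<inter> {0..1}"
  by (auto simp: grid_cell_def field_simps)

lemma disjoint_family_grid_cell: "0 < m \<Longrightarrow> disjoint_family (grid_cell m)"
proof -
  assume "0 < m"
  have "grid_cell m i \<inter> grid_cell m j = {}" if "i < j" for i j
  proof -
    have "real (Suc i) / m \<le> real j / m" using that \<open>0 < m\<close> by (simp add: divide_right_mono)
    then show ?thesis using that by (auto simp: grid_cell_def)
  qed
  then show ?thesis
    unfolding disjoint_family_on_def by (metis Int_commute linorder_neqE_nat)
qed

lemma grid_cell_cover:
  assumes "0 < m" "0 \<le> x" "x \<le> 1"
  shows "\<exists>i<m. x \<in> grid_cell m i"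
proof (cases "x \<le> 1 / m")
  case True
  then have "x \<in> grid_cell m 0" using assms by (simp add: grid_cell_def)
  then show ?thesis using assms by blast
next
  case False
  define i where "i = nat (\<lceil>x * m\<rceil> - 1)"
  have "1 < x * m" using False assms by (simp add: field_simps)
  then have i: "real i = real_of_int \<lceil>x * m\<rceil> - 1" "0 < i" by (auto simp: i_def)
  have "x * m \<le> m" using assms by simp
  then have "i < m" using i by linarith
  have "i < x * m" "x * m \<le> Suc i"
    using i ceiling_correct[of "x * m"] by auto
  then have "x \<in> grid_cell m i" using assms i by (simp add: grid_cell_def field_simps)
  with \<open>i < m\<close> show ?thesis by blast
qed

lemma measure_greaterThanAtMost_eq_diff:
  assumes "finite_measure M" "sets M = sets borel" "0 \<le> a" "a \<le> (b :: real)"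
  shows "measure M {a<..b} = measure M {0..b} - measure M {0..a}"
proof -
  have "{a<..b} = {0..b} - {0..a}" using assms(3) by auto
  then show ?thesis
    using finite_measure.finite_measure_Diff[OF assms(1), of "{0..b}" "{0..a}"] assms by simp
qed

lemma grid_cell_measure_diff:
  assumes M: "finite_measure M" "sets M = sets borel" and U: "finite_measure U" "sets U = sets borel"
    and "0 < m" "i < m" "0 \<le> d"
    and cdf: "\<And>j::nat. 1 \<le> j \<Longrightarrow> j \<le> m \<Longrightarrow> \<bar>measure M {0..j / m} - measure U {0..j / m}\<bar> \<le> d"
  shows "\<bar>measure M (grid_cell m i) - measure U (grid_cell m i)\<bar> \<le> 2 * d"
proof (cases "i = 0")
  case True
  then show ?thesis using cdf[of 1] assms(5,7) by (simp add: grid_cell_def)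
next
  case False
  have "0 \<le> real i / m" "real i / m \<le> Suc i / m" by (simp_all add: divide_right_mono)
  then have "measure M (grid_cell m i) = measure M {0..Suc i / m} - measure M {0..i / m}"
    "measure U (grid_cell m i) = measure U {0..Suc i / m} - measure U {0..i / m}"
    using measure_greaterThanAtMost_eq_diff M U False by (simp_all add: grid_cell_def)
  then show ?thesis using cdf[of i] cdf[of "Suc i"] False assms(6) by (simp add: abs_le_iff)
qed

text \<open>Cover A by the grid cells it meets: they lie in its e-neighbourhood, and each of them
  changes the measure by at most \<delta>.\<close>
lemma measure_le_eps_nbhd01_of_grid:
  assumes M: "finite_measure M" "sets M = sets borel" and U: "finite_measure U" "sets U = sets borel"
    and m: "0 < m" "1 / m < e"
    and cells: "\<And>i. i < m \<Longrightarrow> measure M (grid_cell m i) \<le> measure U (grid_cell m i) + \<delta>"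
    and \<delta>: "0 \<le> \<delta>" "m * \<delta> \<le> e"
    and A: "A \<in> sets borel" "A \<subseteq> {0..1}"
  shows "measure M A \<le> measure U (eps_nbhd01 e A) + e"
proof -
  interpret M: finite_measure M by (rule M(1))
  interpret U: finite_measure U by (rule U(1))
  define K where "K = {i \<in> {..<m}. A \<inter> grid_cell m i \<noteq> {}}"
  define W where "W = (\<Union>i\<in>K. grid_cell m i)"
  have K: "finite K" "card K \<le> m" unfolding K_def by (auto intro: card_mono[of "{..<m}", simplified])
  have cell_sets: "grid_cell m i \<in> sets borel" for i by (simp add: grid_cell_def)
  have W_sets: "W \<in> sets borel" using K(1) cell_sets by (auto simp: W_def)
  have measure_W: "measure N W = (\<Sum>i\<in>K. measure N (grid_cell m i))"
    if "finite_measure N" "sets N = sets borel" for N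
    unfolding W_def using disjoint_family_grid_cell[OF m(1)] K(1) cell_sets that(2)
    by (intro finite_measure.finite_measure_finite_Union[OF that(1)]) (auto simp: disjoint_family_on_def)
  have "A \<subseteq> W" using A grid_cell_cover[OF m(1)] by (force simp: W_def K_def)
  have "W \<subseteq> eps_nbhd01 e A"
  proof
    fix x assume "x \<in> W"
    then obtain i a where i: "i < m" "x \<in> grid_cell m i" "a \<in> A" "a \<in> grid_cell m i"
      by (auto simp: W_def K_def)
    have x: "x \<in> {i / m .. Suc i / m} \<inter> {0..1}" and "a \<in> {i / m .. Suc i / m}"
      using i(2,4) grid_cell_subset[OF m(1) i(1)] by blast+
    moreover have "Suc i / m - i / m = 1 / m" by (simp add: diff_divide_distrib[symmetric])
    ultimately have "dist x a \<le> 1 / m" by (auto simp: dist_real_def abs_le_iff)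
    then show "x \<in> eps_nbhd01 e A"
      using x i(3) m(2) by (force simp: eps_nbhd01_def)
  qed
  have "measure M A \<le> measure M W"
    using \<open>A \<subseteq> W\<close> W_sets M(2) by (intro M.finite_measure_mono) auto
  also have "\<dots> \<le> (\<Sum>i\<in>K. measure U (grid_cell m i) + \<delta>)"
    unfolding measure_W[OF M] by (rule sum_mono) (auto simp: K_def cells)
  also have "\<dots> = measure U W + card K * \<delta>"
    by (simp add: measure_W[OF U] sum.distrib)
  also have "\<dots> \<le> measure U (eps_nbhd01 e A) + e"
  proof (rule add_mono)
    show "measure U W \<le> measure U (eps_nbhd01 e A)"
      using \<open>W \<subseteq> eps_nbhd01 e A\<close> eps_nbhd01_borel U(2) by (intro U.finite_measure_mono) auto
    show "card K * \<delta> \<le> e"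
      using K(2) \<delta> by (meson mult_right_mono of_nat_le_iff order_trans)
  qed
  finally show ?thesis .
qed

lemma levy_prokhorov01_le_of_grid_cdf:
  fixes m :: nat and e d :: real
  assumes M: "finite_measure M" "sets M = sets borel" and U: "finite_measure U" "sets U = sets borel"
    and m: "0 < m" "1 / m < e" and d: "0 \<le> d" "2 * m * d \<le> e"
    and cdf: "\<And>j::nat. 1 \<le> j \<Longrightarrow> j \<le> m \<Longrightarrow> \<bar>measure M {0..j / m} - measure U {0..j / m}\<bar> \<le> d"
  shows "levy_prokhorov01 M U \<le> e"
proof (rule levy_prokhorov01_le)
  have "0 < 1 / real m" using m(1) by simp
  then show "0 < e" using m(2) by linarith
  have cells: "\<bar>measure M (grid_cell m i) - measure U (grid_cell m i)\<bar> \<le> 2 * d" if "i < m" for i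
    by (rule grid_cell_measure_diff[OF M U m(1) that d(1) cdf])
  have "measure M (grid_cell m i) \<le> measure U (grid_cell m i) + 2 * d"
    "measure U (grid_cell m i) \<le> measure M (grid_cell m i) + 2 * d" if "i < m" for i
    using cells[OF that] by (simp_all add: abs_le_iff)
  moreover have "0 \<le> 2 * d" "m * (2 * d) \<le> e" using d by (simp_all add: mult.assoc mult.left_commute)
  ultimately show "measure M A \<le> measure U (eps_nbhd01 e A) + e \<and> measure U A \<le> measure M (eps_nbhd01 e A) + e"
    if "A \<in> sets borel" "A \<subseteq> {0..1}" for A
    using measure_le_eps_nbhd01_of_grid[OF M U m _ _ _ that] measure_le_eps_nbhd01_of_grid[OF U M m _ _ _ that]
    by blast
qed

lemma finite_measure_unif01: "finite_measure unif01"
  using prob_space_uniform_measure[of lborel "{0..1::real}"] by (simp add: unif01_def prob_space_def)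

lemma sets_unif01: "sets unif01 = sets borel"
  by (simp add: unif01_def)

lemma measure_unif01_atLeastAtMost: "0 \<le> s \<Longrightarrow> s \<le> 1 \<Longrightarrow> measure unif01 {0..s} = s"
  by (simp add: unif01_def measure_uniform_measure Int_absorb1)

theorem proposition23:
  fixes \<epsilon> :: real
  assumes "\<epsilon> > 0"
  shows "\<exists>n0. \<forall>n \<ge> n0. \<forall>lam. is_composition n lam \<longrightarrow>
           levy_prokhorov01 (xi1_law lam) unif01 \<le> \<epsilon>"
proof -
  obtain m :: nat where m: "0 < m" "1 / m < \<epsilon>"
    using ex_inverse_of_nat_less[OF assms] by (auto simp: inverse_eq_divide)
  define n0 where "n0 = max 2 (nat \<lceil>2 * m / \<epsilon>\<rceil>)"
  have "levy_prokhorov01 (xi1_law lam) unif01 \<le> \<epsilon>" if "n0 \<le> n" "is_composition n lam" for n lam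
  proof (rule levy_prokhorov01_le_of_grid_cdf[OF finite_measure_xi1_law sets_xi1_law
        finite_measure_unif01 sets_unif01 m])
    have "2 * m / \<epsilon> \<le> n" using that(1) by (simp add: n0_def)
    then show "2 * m * (1 / n) \<le> \<epsilon>" using assms that(1) by (simp add: n0_def field_simps)
    show "\<bar>measure (xi1_law lam) {0..j / m} - measure unif01 {0..j / m}\<bar> \<le> 1 / n"
      if "1 \<le> j" "j \<le> m" for j
      using cdf_xi1_law[OF \<open>is_composition n lam\<close>, of "j / m"] measure_unif01_atLeastAtMost[of "j / m"]
        that \<open>n0 \<le> n\<close> by (simp add: n0_def divide_le_eq_1)
  qed simp
  then show ?thesis by blast
qed

end
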